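(* Let $\lambda>0$, let ${\mathbf{C}}_{\min}\le{\mathbf{C}}_{\max}$ be real symmetric $d\times d$ matrices and ${\mathbf{b}}_{\min}\le{\mathbf{b}}_{\max}$ vectors in $\mathbb{R}^d$. For fixed ${\boldsymbol{\theta}}\in\mathbb{R}^d$, the inner maximization problem $$\max_{{\mathbf{C}},{\mathbf{b}}}\ {\boldsymbol{\theta}}^T{\mathbf{C}}{\boldsymbol{\theta}}-2{\mathbf{b}}^T{\boldsymbol{\theta}}+\lambda\|{\boldsymbol{\theta}}\|_2^2\quad\text{s.t.}\quad {\mathbf{C}}_{\min}\le{\mathbf{C}}\le{\mathbf{C}}_{\max},\ {\mathbf{b}}_{\min}\le{\mathbf{b}}\le{\mathbf{b}}_{\max},\ {\mathbf{C}}\succeq0$$ can be equivalently formulated as $$\min_{{\mathbf{A}},{\mathbf{B}},{\mathbf{d}},{\mathbf{e}},{\mathbf{H}}}\ -\langle{\mathbf{b}}_{\min},{\mathbf{d}}\rangle+\langle{\mathbf{b}}_{\max},{\mathbf{e}}\rangle-\langle{\mathbf{C}}_{\min},{\mathbf{A}}\rangle+\langle{\mathbf{C}}_{\max},{\mathbf{B}}\rangle+\lambda\|{\boldsymbol{\theta}}\|^2$$ $$\text{s.t.}\quad -{\boldsymbol{\theta}}{\boldsymbol{\theta}}^T-{\mathbf{A}}+{\mathbf{B}}-{\mathbf{H}}=0,\quad 2{\boldsymbol{\theta}}-{\mathbf{d}}+{\mathbf{e}}=0,\quad {\mathbf{A}},{\mathbf{B}},{\mathbf{d}},{\mathbf{e}}\ge0,\quad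 {\mathbf{H}}\succeq0.$$ Therefore the min-max problem $\min_{{\boldsymbol{\theta}}}\max_{{\mathbf{C}},{\mathbf{b}}}$ of the first objective over the first constraint set can be alternatively written as the single minimization of the second objective over ${\boldsymbol{\theta}},{\mathbf{A}},{\mathbf{B}},{\mathbf{d}},{\mathbf{e}},{\mathbf{H}}$ subject to the same constraints.
   Context: Matrix and vector inequalities ($\le$, $\ge0$) are entrywise; $\succeq$ is the positive semidefinite order; $\langle\cdot,\cdot\rangle$ is the Euclidean/Frobenius inner product. ${\mathbf{A}},{\mathbf{B}},{\mathbf{H}}$ range over $d\times d$ matrices and ${\mathbf{d}},{\mathbf{e}}$ over $\mathbb{R}^d$. In the paper ${\mathbf{C}}_{\min}={\mathbf{C}}_0-c\boldsymbol{\Delta}$, ${\mathbf{C}}_{\max}={\mathbf{C}}_0+c\boldsymbol{\Delta}$, ${\mathbf{b}}_{\min}={\mathbf{b}}_0-c\boldsymbol{\delta}$, ${\mathbf{b}}_{\max}={\mathbf{b}}_0+c\boldsymbol{\delta}$ are confidence bounds for the second moments ${\mathbf{X}}^T{\mathbf{X}}$, ${\mathbf{X}}^T{\mathbf{y}}$ of a data set with missing entries. *)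

theory Defs
  imports "HOL-Analysis.Analysis"
begin

definition psd :: "real^'n^'n \<Rightarrow> bool" where
  "psd M \<longleftrightarrow> transpose M = M \<and> (\<forall>x. 0 \<le> x \<bullet> (M *v x))"

definition outer :: "real^'n \<Rightarrow> real^'n^'n" where
  "outer v = (\<chi> i j. v $ i * v $ j)"

definition primal_obj :: "real \<Rightarrow> real^'n \<Rightarrow> real^'n^'n \<Rightarrow> real^'n \<Rightarrow> real" where
  "primal_obj lam th C b = th \<bullet> (C *v th) - 2 * (b \<bullet> th) + lam * (norm th)^2"

definition primal_feas ::
  "real^'n^'n \<Rightarrow> real^'n^'n \<Rightarrow> real^'n \<Rightarrow> real^'n \<Rightarrow> ((real^'n^'n) \<times> (real^'n)) set" where
  "primal_feas Cmin Cmax bmin bmax =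
     {(C, b). Cmin \<le> C \<and> C \<le> Cmax \<and> bmin \<le> b \<and> b \<le> bmax \<and> psd C}"

definition dual_obj ::
  "real \<Rightarrow> real^'n^'n \<Rightarrow> real^'n^'n \<Rightarrow> real^'n \<Rightarrow> real^'n \<Rightarrow> real^'n
   \<Rightarrow> real^'n^'n \<Rightarrow> real^'n^'n \<Rightarrow> real^'n \<Rightarrow> real^'n \<Rightarrow> real" where
  "dual_obj lam Cmin Cmax bmin bmax th A B d e =
     - (bmin \<bullet> d) + bmax \<bullet> e - Cmin \<bullet> A + Cmax \<bullet> B + lam * (norm th)^2"

definition dual_feas ::
  "real^'n \<Rightarrow> real^'n^'n \<Rightarrow> real^'n^'n \<Rightarrow> real^'n \<Rightarrow> real^'n \<Rightarrow> real^'n^'n \<Rightarrow> bool" where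
  "dual_feas th A B d e H \<longleftrightarrow>
     - outer th - A + B - H = 0 \<and> 2 *\<^sub>R th - d + e = 0 \<and>
     0 \<le> A \<and> 0 \<le> B \<and> 0 \<le> d \<and> 0 \<le> e \<and> psd H"

end

theory Submission
  imports Defs
begin

(* For fixed theta the objective is affine in (C, b), so the problem splits.  The b-part is a
  linear program over the box [bmin, bmax]: its maximum sits at a vertex and equals the dual
  objective with d, e the positive and negative parts of 2 theta.  For the C-part, weak duality
  is <C, H> >= 0 for positive semidefinite C, H (write H as a sum of outer products).  For
  strong duality, if <C, T> < y (T = theta theta^T) for all psd C in the symmetric part K of the
  box, separating (0, y) from the closed convex set {(C - X, <C, T> - r) | C in K, X psd,
  r >= 0} yields a psd multiplier H with <C, T + H> < y on all of K.  The maximum of <C, M>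
  over the box is attained at the vertex choosing Cmax or Cmin according to the signs of the
  entries of M, and equals the dual objective with B, A the positive and negative parts of
  M = T + H. *)

lemma inner_matrix_vector_sum:
  "(x::real^'n) \<bullet> (M *v y) = (\<Sum>i\<in>UNIV. \<Sum>j\<in>UNIV. x$i * M$i$j * y$j)"
  by (simp add: inner_vec_def matrix_vector_mult_def sum_distrib_left mult.assoc)

lemma inner_matrix_sum: "(M::real^'n^'m) \<bullet> N = (\<Sum>i\<in>UNIV. \<Sum>j\<in>UNIV. M$i$j * N$i$j)"
  by (simp add: inner_vec_def)

lemma inner_outer: "(M::real^'n^'n) \<bullet> outer v = v \<bullet> (M *v v)"
  unfolding inner_matrix_vector_sum by (simp add: inner_vec_def outer_def algebra_simps)

lemma quadratic_form_outer: "x \<bullet> (outer v *v x) = (v \<bullet> x)\<^sup>2"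
  unfolding inner_matrix_vector_sum outer_def
  by (simp add: power2_eq_square inner_vec_def sum_product algebra_simps)

lemma transpose_outer: "transpose (outer v) = outer v"
  by (simp add: transpose_def outer_def vec_eq_iff mult.commute)

lemma outer_scaleR: "outer (r *\<^sub>R v) = r\<^sup>2 *\<^sub>R outer v"
  by (simp add: outer_def vec_eq_iff power2_eq_square algebra_simps)

lemma outer_zero [simp]: "outer 0 = 0"
  by (simp add: outer_def vec_eq_iff)

lemma symmetric_entry: "transpose M = M \<Longrightarrow> M$i$j = M$j$i"
  by (metis transpose_def vec_lambda_beta)

lemma transpose_add: "transpose (A + B) = transpose A + transpose (B::'a::plus^'n^'m)"
  by (simp add: transpose_def vec_eq_iff)

lemma inner_transpose_symmetric:
  assumes "transpose S = S"
  shows "transpose M \<bullet> S = (M::real^'n^'n) \<bullet> S"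
proof -
  have "transpose M \<bullet> S = (\<Sum>i\<in>UNIV. \<Sum>j\<in>UNIV. M$j$i * S$j$i)"
    using symmetric_entry[OF assms] by (simp add: inner_matrix_sum transpose_def)
  also have "\<dots> = M \<bullet> S"
    unfolding inner_matrix_sum by (rule sum.swap)
  finally show ?thesis .
qed

lemma quadratic_form_symmetric:
  assumes "transpose M = M"
  shows "(x::real^'n) \<bullet> (M *v y) = y \<bullet> (M *v x)"
  unfolding inner_matrix_vector_sum
  by (subst sum.swap, intro sum.cong refl)
    (simp add: symmetric_entry[of M] assms mult.commute mult.left_commute)

lemma quadratic_form_add_scaleR:
  assumes "transpose M = M"
  shows "(x + t *\<^sub>R y) \<bullet> (M *v (x + t *\<^sub>R y))
       = x \<bullet> (M *v x) + 2 * t * (y \<bullet> (M *v x)) + t\<^sup>2 * (y \<bullet> (M *v (y::real^'n)))"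
  using quadratic_form_symmetric[OF assms, of x y]
  by (simp add: matrix_vector_right_distrib matrix_vector_mult_scaleR algebra_simps
      power2_eq_square inner_add_left inner_add_right)

lemma inner_axis_matrix_vector: "axis i 1 \<bullet> ((M::real^'n^'n) *v x) = M$i \<bullet> x"
proof -
  have "axis i 1 \<bullet> (M *v x) = (M *v x)$i" by (simp add: inner_axis')
  also have "\<dots> = M$i \<bullet> x" by (simp add: matrix_vector_mult_def inner_vec_def)
  finally show ?thesis .
qed

lemma inner_axis_matrix_axis: "axis i 1 \<bullet> ((M::real^'n^'n) *v axis j 1) = M$i$j"
  by (simp add: inner_axis_matrix_vector inner_axis)

subsection \<open>Positive semidefinite matrices\<close>

lemma psd_diag_nonneg: "psd M \<Longrightarrow> 0 \<le> M$i$i"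
  unfolding psd_def by (metis inner_axis_matrix_axis)

lemma psd_zero_diag_imp_zero_row:
  assumes "psd M" and "M$i$i = 0"
  shows "M$i = 0"
proof (rule ccontr)
  assume "M$i \<noteq> 0"
  then obtain j where ne: "M$i$j \<noteq> 0" by (auto simp: vec_eq_iff)
  have sym: "transpose M = M" using assms(1) psd_def by blast
  define t where "t = - (M$j$j + 1) / (2 * M$i$j)"
  have "0 \<le> (axis j 1 + t *\<^sub>R axis i 1) \<bullet> (M *v (axis j 1 + t *\<^sub>R axis i 1))"
    using assms(1) psd_def by blast
  also have "\<dots> = M$j$j + 2 * t * M$i$j + t\<^sup>2 * M$i$i"
    by (simp add: quadratic_form_add_scaleR[OF sym] inner_axis_matrix_axis)
  also have "\<dots> = -1"
    using ne assms(2) by (simp add: t_def field_simps)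
  finally show False by simp
qed

lemma psd_pivot_elimination:
  assumes "psd M" and pivot: "0 < M$i$i"
  shows "psd (M - (1 / M$i$i) *\<^sub>R outer (M$i))"
proof -
  define c where "c = M$i$i"
  have sym: "transpose M = M" using assms(1) psd_def by blast
  have "0 \<le> x \<bullet> ((M - (1 / c) *\<^sub>R outer (M$i)) *v x)" for x
  proof -
    \<comment> \<open>s minimises the quadratic form of M along the line x + s axis i 1\<close>
    define s where "s = - (M$i \<bullet> x) / c"
    have "0 \<le> (x + s *\<^sub>R axis i 1) \<bullet> (M *v (x + s *\<^sub>R axis i 1))"
      using assms(1) psd_def by blast
    also have "\<dots> = x \<bullet> (M *v x) + 2 * s * (M$i \<bullet> x) + s\<^sup>2 * c"
      by (simp add: quadratic_form_add_scaleR[OF sym] inner_axis_matrix_axis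
          inner_axis_matrix_vector inner_axis c_def)
    also have "\<dots> = x \<bullet> ((M - (1 / c) *\<^sub>R outer (M$i)) *v x)"
      using pivot by (simp add: s_def c_def matrix_vector_mult_diff_rdistrib quadratic_form_outer
          inner_diff_right scaleR_matrix_vector_assoc[symmetric] field_simps power2_eq_square)
    finally show ?thesis .
  qed
  moreover have "transpose (M - (1 / c) *\<^sub>R outer (M$i)) = M - (1 / c) *\<^sub>R outer (M$i)"
    by (simp add: vec_eq_iff transpose_def outer_def symmetric_entry[OF sym] mult.commute)
  ultimately show ?thesis unfolding psd_def c_def by blast
qed

lemma psd_sum_outer_on_rows:
  assumes "finite I" and "psd M" and "\<And>k. k \<notin> I \<Longrightarrow> M$k = 0"
  shows "\<exists>v. M = (\<Sum>k\<in>I. outer (v k))"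
  using assms
proof (induction I arbitrary: M rule: finite_induct)
  case empty
  then have "M = 0" by (simp add: vec_eq_iff)
  then show ?case by simp
next
  case (insert i I)
  have sym: "transpose M = M" using insert.prems(1) psd_def by blast
  show ?case
  proof (cases "M$i$i = 0")
    case True
    then have "M$i = 0" by (rule psd_zero_diag_imp_zero_row[OF insert.prems(1)])
    then obtain v where v: "M = (\<Sum>k\<in>I. outer (v k))"
      using insert.IH insert.prems by (metis insert_iff)
    have "M = (\<Sum>k\<in>insert i I. outer ((v(i := 0)) k))"
      using insert.hyps by (auto simp: v intro!: sum.cong)
    then show ?thesis by blast
  next
    case False
    define c where "c = M$i$i"
    have c: "0 < c" using False psd_diag_nonneg[OF insert.prems(1), of i] c_def by linarith
    define M' where "M' = M - (1 / c) *\<^sub>R outer (M$i)"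
    have "psd M'" using psd_pivot_elimination[OF insert.prems(1)] c unfolding M'_def c_def by blast
    moreover have "M'$k = 0" if "k \<notin> I" for k
    proof (cases "k = i")
      case True
      then show ?thesis using c by (simp add: M'_def outer_def c_def vec_eq_iff)
    next
      case False
      then have "M$k = 0" using insert.prems(2) that by blast
      moreover have "M$i$k = 0" using calculation symmetric_entry[OF sym, of i k] by simp
      ultimately show ?thesis by (simp add: M'_def outer_def vec_eq_iff)
    qed
    ultimately obtain v where v: "M' = (\<Sum>k\<in>I. outer (v k))" using insert.IH by blast
    have "M = M' + outer ((1 / sqrt c) *\<^sub>R M$i)"
      using c by (simp add: M'_def outer_scaleR power_divide)
    also have "\<dots> = (\<Sum>k\<in>insert i I. outer ((v(i := (1 / sqrt c) *\<^sub>R M$i)) k))"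
      using insert.hyps by (auto simp: v add.commute intro!: sum.cong)
    finally show ?thesis by blast
  qed
qed

lemma psd_eq_sum_outer:
  fixes M :: "real^'n^'n"
  shows "psd M \<Longrightarrow> \<exists>v::'n \<Rightarrow> real^'n. M = (\<Sum>k\<in>UNIV. outer (v k))"
  using psd_sum_outer_on_rows[of UNIV M] by simp

lemma inner_psd_nonneg:
  fixes C H :: "real^'n^'n"
  assumes "psd C" and "psd H"
  shows "0 \<le> C \<bullet> H"
proof -
  obtain v :: "'n \<Rightarrow> real^'n" where "H = (\<Sum>k\<in>UNIV. outer (v k))" using psd_eq_sum_outer[OF assms(2)] by blast
  then have "C \<bullet> H = (\<Sum>k\<in>UNIV. v k \<bullet> (C *v v k))" by (simp add: inner_sum_right inner_outer)
  also have "0 \<le> \<dots>" using assms(1) by (simp add: psd_def sum_nonneg)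
  finally show ?thesis .
qed

lemma psd_zero: "psd 0"
  by (simp add: psd_def transpose_def vec_eq_iff)

lemma psd_scaleR: "psd M \<Longrightarrow> 0 \<le> t \<Longrightarrow> psd (t *\<^sub>R M)"
  unfolding psd_def by (simp add: transpose_scalar scaleR_matrix_vector_assoc[symmetric])

lemma convex_psd: "convex {M. psd M}"
  unfolding convex_def psd_def
  by (auto simp: transpose_add transpose_scalar matrix_vector_mult_add_rdistrib
      scaleR_matrix_vector_assoc[symmetric] inner_add_right)

lemma closed_symmetric: "closed {M::real^'n^'n. transpose M = M}"
proof -
  have "{M::real^'n^'n. transpose M = M} = {M. \<forall>i j. M$i$j = M$j$i}"
    by (auto simp: transpose_def vec_eq_iff)
  then show ?thesis
    by (simp only:) (intro closed_Collect_all closed_Collect_eq continuous_intros continuous_on_component)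
qed

lemma convex_symmetric: "convex {M::real^'n^'n. transpose M = M}"
  by (auto simp: convex_def transpose_add transpose_scalar)

lemma closed_psd: "closed {M::real^'n^'n. psd M}"
proof -
  have "{M::real^'n^'n. psd M} = {M. transpose M = M}
      \<inter> {M. \<forall>x. 0 \<le> (\<Sum>i\<in>UNIV. \<Sum>j\<in>UNIV. x$i * M$i$j * x$j)}"
    by (auto simp: psd_def inner_matrix_vector_sum)
  then show ?thesis
    by (simp only:) (intro closed_Int closed_symmetric closed_Collect_all closed_Collect_le
        continuous_intros continuous_on_component)
qed

lemma nonpos_if_bounded_along_ray:
  assumes "\<And>t. 0 \<le> t \<Longrightarrow> (b::real) < K - t * c"
  shows "c \<le> 0"
proof (rule ccontr)
  assume "\<not> c \<le> 0"
  then have "b < K - ((K - b) / c) * c"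
    using assms[of 0] assms[of "(K - b) / c"] by simp
  then show False using \<open>\<not> c \<le> 0\<close> by simp
qed

lemma psd_separation:
  fixes K :: "(real^'n^'n) set" and T :: "real^'n^'n"
  assumes "compact K" and "convex K" and "C\<^sub>0 \<in> K"
    and sym: "\<And>C. C \<in> K \<Longrightarrow> transpose C = C"
    and bound: "\<And>C. C \<in> K \<Longrightarrow> psd C \<Longrightarrow> C \<bullet> T < y"
  obtains G a \<beta> where "psd G" and "a \<le> 0" and "a * y < \<beta>"
    and "\<And>C. C \<in> K \<Longrightarrow> \<beta> < a * (C \<bullet> T) - G \<bullet> C"
proof -
  \<comment> \<open>The matrix part of a normal separating (0, y) from W gives G, the real part gives a.\<close>
  define W where "W = (\<Union>p\<in>(\<lambda>C. (C, C \<bullet> T)) ` K. \<Union>q\<in>{M. psd M} \<times> {0..}. {p - q})"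
  have closed: "closed W" unfolding W_def
    by (intro compact_closed_differences compact_continuous_image closed_Times closed_psd
        closed_atLeast continuous_intros \<open>compact K\<close>)
  have convex: "convex W" unfolding W_def
    by (intro convex_differences convex_linear_image convex_Times convex_psd \<open>convex K\<close>)
      (auto intro!: linearI simp: inner_add_left)
  have notin: "(0, y) \<notin> W"
  proof
    assume "(0, y) \<in> W"
    then obtain C X r where "C \<in> K" "psd X" "0 \<le> r" and eq: "(0, y) = (C, C \<bullet> T) - (X, r)"
      unfolding W_def by blast
    from eq have "C = X" and y: "y = C \<bullet> T - r"
      by (simp_all add: prod_eq_iff)
    with \<open>C \<in> K\<close> \<open>psd X\<close> have "C \<bullet> T < y" using bound by blast
    with y \<open>0 \<le> r\<close> show False by linarith
  qed
  obtain n \<beta> where sep0: "n \<bullet> (0, y) < \<beta>" and sepW: "\<And>w. w \<in> W \<Longrightarrow> \<beta> < n \<bullet> w"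
    using separating_hyperplane_closed_point[OF convex closed notin] by blast
  obtain A a where n: "n = (A, a)" by (cases n)
  have sep: "\<beta> < A \<bullet> (C - X) + a * (C \<bullet> T - r)" if "C \<in> K" "psd X" "0 \<le> r" for C X r
  proof -
    have "(C, C \<bullet> T) - (X, r) \<in> W" unfolding W_def using that by blast
    from sepW[OF this] show ?thesis by (simp add: n)
  qed
  have "a \<le> 0"
  proof (rule nonpos_if_bounded_along_ray)
    fix r :: real assume "0 \<le> r"
    show "\<beta> < A \<bullet> C\<^sub>0 + a * (C\<^sub>0 \<bullet> T) - r * a"
      using sep[OF \<open>C\<^sub>0 \<in> K\<close> psd_zero \<open>0 \<le> r\<close>] by (simp add: right_diff_distrib mult.commute)
  qed
  define G where "G = (- 1 / 2) *\<^sub>R (A + transpose A)"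
  have G_inner: "G \<bullet> S = - (A \<bullet> S)" if "transpose S = S" for S
    unfolding G_def using inner_transpose_symmetric[OF that, of A] by (simp add: inner_add_left)
  have "A \<bullet> outer x \<le> 0" for x
  proof (rule nonpos_if_bounded_along_ray)
    fix t :: real assume "0 \<le> t"
    then have "psd (t *\<^sub>R outer x)"
      by (intro psd_scaleR) (simp_all add: psd_def transpose_outer quadratic_form_outer)
    then show "\<beta> < A \<bullet> C\<^sub>0 + a * (C\<^sub>0 \<bullet> T) - t * (A \<bullet> outer x)"
      using sep[OF \<open>C\<^sub>0 \<in> K\<close>, of "t *\<^sub>R outer x" 0] by (simp add: inner_diff_right)
  qed
  then have "psd G"
    unfolding psd_def using G_inner[OF transpose_outer]
    by (simp add: G_def inner_outer[symmetric] transpose_def vec_eq_iff)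
  moreover have "a * y < \<beta>" using sep0 by (simp add: n)
  moreover have "\<beta> < a * (C \<bullet> T) - G \<bullet> C" if "C \<in> K" for C
    using sep[OF that psd_zero, of 0] G_inner[OF sym[OF that]] by simp
  ultimately show ?thesis using that \<open>a \<le> 0\<close> by blast
qed

lemma psd_lagrange_multiplier:
  fixes K :: "(real^'n^'n) set" and T :: "real^'n^'n"
  assumes "compact K" and "convex K" and "K \<noteq> {}"
    and "\<And>C. C \<in> K \<Longrightarrow> transpose C = C"
    and "\<And>C. C \<in> K \<Longrightarrow> psd C \<Longrightarrow> C \<bullet> T < y"
  obtains H where "psd H" and "\<And>C. C \<in> K \<Longrightarrow> C \<bullet> (T + H) < y"
proof -
  obtain C\<^sub>0 where "C\<^sub>0 \<in> K" using \<open>K \<noteq> {}\<close> by blast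
  obtain G a \<beta> where G: "psd G" and "a \<le> 0" and "a * y < \<beta>"
    and sep: "\<And>C. C \<in> K \<Longrightarrow> \<beta> < a * (C \<bullet> T) - G \<bullet> C"
    using psd_separation[OF assms(1,2) \<open>C\<^sub>0 \<in> K\<close> assms(4,5)] by blast
  show ?thesis
  proof (cases "a = 0")
    case False
    then have "a < 0" using \<open>a \<le> 0\<close> by simp
    have "C \<bullet> (T + (- 1 / a) *\<^sub>R G) < y" if "C \<in> K" for C
    proof -
      have "C \<bullet> (T + (- 1 / a) *\<^sub>R G) = C \<bullet> T - (G \<bullet> C) / a"
        by (simp add: inner_add_right inner_diff_right inner_commute)
      also have "\<dots> = (a * (C \<bullet> T) - G \<bullet> C) / a"
        using \<open>a < 0\<close> by (simp add: field_simps)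
      also have "\<dots> < \<beta> / a" using sep[OF that] \<open>a < 0\<close> by (simp add: divide_strict_right_mono_neg)
      also have "\<dots> < y" using \<open>a * y < \<beta>\<close> \<open>a < 0\<close> by (simp add: divide_less_eq mult.commute)
      finally show ?thesis .
    qed
    then show ?thesis using that psd_scaleR[OF G, of "- 1 / a"] \<open>a < 0\<close> by simp
  next
    \<comment> \<open>A vertical hyperplane: G alone separates, so a large multiple of it works.\<close>
    case True
    then have "0 < \<beta>" using \<open>a * y < \<beta>\<close> by simp
    obtain R where R: "\<And>C. C \<in> K \<Longrightarrow> norm C \<le> R"
      using compact_imp_bounded[OF \<open>compact K\<close>] bounded_iff by blast
    define t where "t = (\<bar>R * norm T - y\<bar> + 1) / \<beta>"
    have "0 < t" using \<open>0 < \<beta>\<close> by (simp add: t_def add_nonneg_pos)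
    have "C \<bullet> (T + t *\<^sub>R G) < y" if "C \<in> K" for C
    proof -
      have "C \<bullet> T \<le> norm C * norm T" by (rule norm_cauchy_schwarz)
      also have "\<dots> \<le> R * norm T" using R[OF that] by (simp add: mult_right_mono)
      finally have "C \<bullet> T \<le> R * norm T" .
      moreover have "\<beta> < - (G \<bullet> C)" using sep[OF that] True by simp
      then have "t * \<beta> < t * - (G \<bullet> C)" using \<open>0 < t\<close> by (rule mult_strict_left_mono)
      moreover have "t * \<beta> = \<bar>R * norm T - y\<bar> + 1" using \<open>0 < \<beta>\<close> by (simp add: t_def)
      moreover have "C \<bullet> (T + t *\<^sub>R G) = C \<bullet> T + t * (G \<bullet> C)"
        by (simp add: inner_add_right inner_commute)
      ultimately show ?thesis by linarith
    qed
    then show ?thesis using that psd_scaleR[OF G, of t] \<open>0 < t\<close> by simp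
  qed
qed

subsection \<open>Entrywise positive parts and box maximizers\<close>

definition vec_pos_part :: "real^'n \<Rightarrow> real^'n" where
  "vec_pos_part v = (\<chi> i. max (v$i) 0)"

definition box_maximizer :: "real^'n \<Rightarrow> real^'n \<Rightarrow> real^'n \<Rightarrow> real^'n" where
  "box_maximizer lo hi w = (\<chi> i. if 0 \<le> w$i then hi$i else lo$i)"

lemma vec_pos_part_nonneg: "0 \<le> vec_pos_part v"
  by (simp add: vec_pos_part_def less_eq_vec_def)

lemma vec_pos_part_diff: "vec_pos_part v - vec_pos_part (- v) = v"
  by (simp add: vec_pos_part_def vec_eq_iff max_def)

lemma box_maximizer_bounds:
  "lo \<le> hi \<Longrightarrow> lo \<le> box_maximizer lo hi w \<and> box_maximizer lo hi w \<le> hi"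
  by (simp add: box_maximizer_def less_eq_vec_def)

lemma inner_box_maximizer:
  "box_maximizer lo hi w \<bullet> w = hi \<bullet> vec_pos_part w - lo \<bullet> vec_pos_part (- w)"
  unfolding inner_vec_def sum_subtractf[symmetric]
  by (intro sum.cong refl) (simp add: box_maximizer_def vec_pos_part_def max_def)

lemma inner_le_inner_nonneg: "0 \<le> a \<Longrightarrow> x \<le> y \<Longrightarrow> (x::real^'n) \<bullet> a \<le> y \<bullet> a"
  unfolding inner_vec_def
  by (intro sum_mono) (auto simp: less_eq_vec_def intro: mult_right_mono)

definition mat_pos_part :: "real^'n^'m \<Rightarrow> real^'n^'m" where
  "mat_pos_part M = (\<chi> i. vec_pos_part (M$i))"

definition mat_box_maximizer :: "real^'n^'m \<Rightarrow> real^'n^'m \<Rightarrow> real^'n^'m \<Rightarrow> real^'n^'m" where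
  "mat_box_maximizer Lo Hi W = (\<chi> i. box_maximizer (Lo$i) (Hi$i) (W$i))"

lemma mat_pos_part_nonneg: "0 \<le> mat_pos_part M"
  by (simp add: mat_pos_part_def vec_pos_part_def less_eq_vec_def)

lemma mat_pos_part_diff: "mat_pos_part M - mat_pos_part (- M) = M"
  by (simp add: mat_pos_part_def vec_pos_part_def vec_eq_iff max_def)

lemma mat_box_maximizer_bounds:
  "Lo \<le> Hi \<Longrightarrow> Lo \<le> mat_box_maximizer Lo Hi W \<and> mat_box_maximizer Lo Hi W \<le> Hi"
  by (simp add: mat_box_maximizer_def box_maximizer_def less_eq_vec_def)

lemma inner_mat_box_maximizer:
  "mat_box_maximizer Lo Hi W \<bullet> W = Hi \<bullet> mat_pos_part W - Lo \<bullet> mat_pos_part (- W)"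
  unfolding inner_vec_def[of "mat_box_maximizer Lo Hi W"] inner_vec_def[of Hi] inner_vec_def[of Lo]
  by (simp add: mat_box_maximizer_def mat_pos_part_def inner_box_maximizer sum_subtractf)

lemma mat_inner_le_inner_nonneg: "0 \<le> A \<Longrightarrow> X \<le> Y \<Longrightarrow> (X::real^'n^'m) \<bullet> A \<le> Y \<bullet> A"
  unfolding inner_vec_def[of X] inner_vec_def[of Y]
  by (intro sum_mono inner_le_inner_nonneg) (auto simp: less_eq_vec_def)

lemma transpose_mat_box_maximizer:
  assumes "transpose Lo = Lo" and "transpose Hi = Hi" and "transpose W = W"
  shows "transpose (mat_box_maximizer Lo Hi W) = mat_box_maximizer Lo Hi W"
  using symmetric_entry[OF assms(1)] symmetric_entry[OF assms(2)] symmetric_entry[OF assms(3)]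
  by (simp add: mat_box_maximizer_def box_maximizer_def transpose_def vec_eq_iff)

lemma atLeastAtMost_eq_cbox_mat: "{Lo..Hi} = cbox Lo (Hi::real^'n^'m)"
  by (auto simp: less_eq_vec_def mem_box Basis_vec_def inner_axis)

lemma symmetric_box_eq:
  "{C. Lo \<le> C \<and> C \<le> Hi \<and> transpose C = C} = cbox Lo Hi \<inter> {C::real^'n^'n. transpose C = C}"
  by (auto simp: atLeastAtMost_eq_cbox_mat[symmetric])

lemma compact_symmetric_box: "compact {C::real^'n^'n. Lo \<le> C \<and> C \<le> Hi \<and> transpose C = C}"
  unfolding symmetric_box_eq by (simp add: compact_Int_closed closed_symmetric)

lemma convex_symmetric_box: "convex {C::real^'n^'n. Lo \<le> C \<and> C \<le> Hi \<and> transpose C = C}"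
  unfolding symmetric_box_eq by (simp add: convex_Int convex_box convex_symmetric)

subsection \<open>Duality for a fixed parameter\<close>

lemma primal_obj_affine: "primal_obj lam th C b = C \<bullet> outer th + primal_obj lam th 0 b"
  by (simp add: primal_obj_def inner_outer)

lemma weak_duality:
  assumes "(C, b) \<in> primal_feas Cmin Cmax bmin bmax" and "dual_feas th A B d e H"
  shows "primal_obj lam th C b \<le> dual_obj lam Cmin Cmax bmin bmax th A B d e"
proof -
  have C: "Cmin \<le> C" "C \<le> Cmax" "psd C" and b: "bmin \<le> b" "b \<le> bmax"
    using assms(1) by (auto simp: primal_feas_def)
  have feas: "outer th = B - A - H" "2 *\<^sub>R th = d - e" "0 \<le> A" "0 \<le> B" "0 \<le> d" "0 \<le> e" "psd H"
    using assms(2) unfolding dual_feas_def by (auto simp: algebra_simps eq_neg_iff_add_eq_0)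
  have "primal_obj lam th C b = C \<bullet> B - C \<bullet> A - C \<bullet> H - (b \<bullet> d - b \<bullet> e) + lam * (norm th)\<^sup>2"
    using feas(1,2) inner_outer[of C th] inner_scaleR_right[of b 2 th]
    by (simp add: primal_obj_def inner_diff_right inner_commute)
  also have "\<dots> \<le> dual_obj lam Cmin Cmax bmin bmax th A B d e"
    using mat_inner_le_inner_nonneg[OF feas(4) C(2)] mat_inner_le_inner_nonneg[OF feas(3) C(1)]
      inner_psd_nonneg[OF C(3) feas(7)]
      inner_le_inner_nonneg[OF feas(5) b(1)] inner_le_inner_nonneg[OF feas(6) b(2)]
    unfolding dual_obj_def by linarith
  finally show ?thesis .
qed

lemma dual_feas_witness:
  assumes "psd H"
  shows "dual_feas th (mat_pos_part (- (outer th + H))) (mat_pos_part (outer th + H))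
    (vec_pos_part (2 *\<^sub>R th)) (vec_pos_part (- (2 *\<^sub>R th))) H"
proof -
  define M where "M = outer th + H"
  have "- outer th - mat_pos_part (- M) + mat_pos_part M - H = (mat_pos_part M - mat_pos_part (- M)) - M"
    by (simp add: M_def algebra_simps)
  moreover have "2 *\<^sub>R th - vec_pos_part (2 *\<^sub>R th) + vec_pos_part (- (2 *\<^sub>R th))
      = 2 *\<^sub>R th - (vec_pos_part (2 *\<^sub>R th) - vec_pos_part (- (2 *\<^sub>R th)))"
    by (simp add: algebra_simps)
  ultimately show ?thesis
    unfolding dual_feas_def M_def[symmetric] mat_pos_part_diff vec_pos_part_diff
    using assms by (simp add: mat_pos_part_nonneg vec_pos_part_nonneg)
qed

lemma dual_obj_witness:
  "dual_obj lam Cmin Cmax bmin bmax th (mat_pos_part (- M)) (mat_pos_part M)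
      (vec_pos_part (2 *\<^sub>R th)) (vec_pos_part (- (2 *\<^sub>R th)))
    = primal_obj lam th (mat_box_maximizer Cmin Cmax M) (box_maximizer bmin bmax (- (2 *\<^sub>R th)))
      + mat_box_maximizer Cmin Cmax M \<bullet> (M - outer th)"
  using inner_mat_box_maximizer[of Cmin Cmax M] inner_box_maximizer[of bmin bmax "- (2 *\<^sub>R th)"]
  by (simp add: dual_obj_def primal_obj_def inner_outer[symmetric] inner_diff_right)

lemma exists_dual_obj_less:
  assumes "transpose Cmin = Cmin" and "transpose Cmax = Cmax" and "Cmin \<le> Cmax"
    and "bmin \<le> bmax"
    and primal: "\<And>C b. (C, b) \<in> primal_feas Cmin Cmax bmin bmax \<Longrightarrow> primal_obj lam th C b < z"
  shows "\<exists>A B d e H. dual_feas th A B d e H \<and> dual_obj lam Cmin Cmax bmin bmax th A B d e < z"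
proof -
  define K where "K = {C. Cmin \<le> C \<and> C \<le> Cmax \<and> transpose C = C}"
  define b where "b = box_maximizer bmin bmax (- (2 *\<^sub>R th))"
  define y where "y = z - primal_obj lam th 0 b"
  have "compact K" and "convex K"
    unfolding K_def by (rule compact_symmetric_box, rule convex_symmetric_box)
  moreover have "K \<noteq> {}" using assms(1,3) by (auto simp: K_def)
  moreover have "\<And>C. C \<in> K \<Longrightarrow> transpose C = C" by (simp add: K_def)
  moreover have "C \<bullet> outer th < y" if "C \<in> K" "psd C" for C
  proof -
    have "(C, b) \<in> primal_feas Cmin Cmax bmin bmax"
      using that box_maximizer_bounds[OF assms(4)] by (simp add: K_def primal_feas_def b_def)
    from primal[OF this] show ?thesis using primal_obj_affine[of lam th C b] unfolding y_def by linarith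
  qed
  ultimately obtain H where "psd H" and H: "\<And>C. C \<in> K \<Longrightarrow> C \<bullet> (outer th + H) < y"
    using psd_lagrange_multiplier[of K "outer th" y] by blast
  define M where "M = outer th + H"
  have "transpose M = M"
    using \<open>psd H\<close> by (simp add: M_def psd_def transpose_add transpose_outer)
  define C where "C = mat_box_maximizer Cmin Cmax M"
  have "C \<in> K"
    using mat_box_maximizer_bounds[OF assms(3)] transpose_mat_box_maximizer[OF assms(1,2)]
      \<open>transpose M = M\<close>
    by (simp add: K_def C_def)
  have "dual_obj lam Cmin Cmax bmin bmax th (mat_pos_part (- M)) (mat_pos_part M)
      (vec_pos_part (2 *\<^sub>R th)) (vec_pos_part (- (2 *\<^sub>R th)))
      = primal_obj lam th C b + C \<bullet> (M - outer th)"
    by (simp add: dual_obj_witness C_def b_def)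
  also have "\<dots> = C \<bullet> M + primal_obj lam th 0 b"
    by (simp add: primal_obj_affine[of lam th C b] inner_diff_right)
  also have "\<dots> < z"
    using H[OF \<open>C \<in> K\<close>] by (simp add: y_def M_def)
  finally show ?thesis using dual_feas_witness[OF \<open>psd H\<close>] unfolding M_def by blast
qed

lemma primal_value_eq_dual_value:
  assumes "transpose Cmin = Cmin" and "transpose Cmax = Cmax" and "Cmin \<le> Cmax"
    and "bmin \<le> bmax"
  shows "(SUP p\<in>primal_feas Cmin Cmax bmin bmax. ereal (primal_obj lam th (fst p) (snd p)))
       = (INF q\<in>{(A, B, d, e, H). dual_feas th A B d e H}.
            ereal (case q of (A, B, d, e, H) \<Rightarrow> dual_obj lam Cmin Cmax bmin bmax th A B d e))"
    (is "?P = ?D")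
proof (rule antisym)
  show "?P \<le> ?D"
  proof (intro SUP_least INF_greatest)
    fix p q
    assume "p \<in> primal_feas Cmin Cmax bmin bmax" and "q \<in> {(A, B, d, e, H). dual_feas th A B d e H}"
    then show "ereal (primal_obj lam th (fst p) (snd p))
        \<le> ereal (case q of (A, B, d, e, H) \<Rightarrow> dual_obj lam Cmin Cmax bmin bmax th A B d e)"
      using weak_duality[of "fst p" "snd p"] by (auto split: prod.splits)
  qed
  show "?D \<le> ?P"
  proof (rule dense_ge)
    fix x assume "?P < x"
    show "?D \<le> x"
    proof (cases x)
      case (real z)
      have "primal_obj lam th C b < z" if "(C, b) \<in> primal_feas Cmin Cmax bmin bmax" for C b
      proof -
        have "ereal (primal_obj lam th C b) \<le> ?P"
          using SUP_upper[OF that, of "\<lambda>p. ereal (primal_obj lam th (fst p) (snd p))"] by simp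
        also note \<open>?P < x\<close>
        finally show ?thesis using real by simp
      qed
      then obtain A B d e H where "dual_feas th A B d e H"
        and "dual_obj lam Cmin Cmax bmin bmax th A B d e < z"
        using exists_dual_obj_less[OF assms] by blast
      then show ?thesis
        using real by (intro INF_lower2[of "(A, B, d, e, H)"]) auto
    qed (use \<open>?P < x\<close> in auto)
  qed
qed

theorem theorem3:
  fixes lam :: real
    and Cmin Cmax :: "real^'n^'n"
    and bmin bmax :: "real^'n"
  assumes "lam > 0"
    and "transpose Cmin = Cmin" and "transpose Cmax = Cmax" and "Cmin \<le> Cmax"
    and "bmin \<le> bmax"
  shows "(\<forall>th :: real^'n.
            (SUP p\<in>primal_feas Cmin Cmax bmin bmax. ereal (primal_obj lam th (fst p) (snd p)))
          = (INF q\<in>{(A, B, d, e, H). dual_feas th A B d e H}.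
               ereal (case q of (A, B, d, e, H) \<Rightarrow> dual_obj lam Cmin Cmax bmin bmax th A B d e)))
       \<and> (INF th :: real^'n. SUP p\<in>primal_feas Cmin Cmax bmin bmax.
              ereal (primal_obj lam th (fst p) (snd p)))
         = (INF q\<in>{(th, A, B, d, e, H). dual_feas th A B d e H}.
              ereal (case q of (th, A, B, d, e, H) \<Rightarrow> dual_obj lam Cmin Cmax bmin bmax th A B d e))"
proof -
  note duality = primal_value_eq_dual_value[OF assms(2-5)]
  have "(INF th :: real^'n. SUP p\<in>primal_feas Cmin Cmax bmin bmax.
            ereal (primal_obj lam th (fst p) (snd p)))
      = (INF th. INF q\<in>{(A, B, d, e, H). dual_feas th A B d e H}.
            ereal (case q of (A, B, d, e, H) \<Rightarrow> dual_obj lam Cmin Cmax bmin bmax th A B d e))"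
    by (simp only: duality)
  also have "\<dots> = (INF q\<in>{(th, A, B, d, e, H). dual_feas th A B d e H}.
            ereal (case q of (th, A, B, d, e, H) \<Rightarrow> dual_obj lam Cmin Cmax bmin bmax th A B d e))"
    unfolding INF_Sigma by (intro INF_cong) (auto simp: split_beta)
  finally show ?thesis by (simp only: duality simp_thms)
qed

end
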